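(* Let $n\ge3$ with $n\equiv 3\pmod 4$ and let $D_{2n}=\langle a,b\mid a^n=b^2=1,\ ba=a^{-1}b\rangle$ be the dihedral group of order $2n$. Then the sequence $S=a^{[(n-1)/2]}\boldsymbol{\cdot}b^{[2]}$ lies in $\mathsf q(\mathcal B(D_{2n}))\setminus\mathcal B(D_{2n})$ while $S^{[2]},S^{[3]}\in\mathcal B(D_{2n})$; consequently, if a finite group $G$ contains a subgroup isomorphic to $D_{2n}$, then $\mathcal B(G)$ is not seminormal.
   Context: For a finite group $G$ (multiplicative, identity $1_G$) and $G_0\subset G$, $\mathcal F(G_0)$ is the free abelian monoid with basis $G_0$ (sequences $S=g_1\boldsymbol{\cdot}\ldots\boldsymbol{\cdot}g_\ell$, operation $\boldsymbol{\cdot}$ = concatenation; $g^{[k]}$ and $S^{[k]}$ denote $k$-fold products). $\pi(S)=\{g_{\tau(1)}\cdots g_{\tau(\ell)}:\tau\text{ a permutation of }[1,\ell]\}$ and $\mathcal B(G_0)=\{S\in\mathcal F(G_0):1_G\in\pi(S)\}$. $\mathsf q(H)$ is the quotient group of a monoid $H$. A monoid $H$ is seminormal if $x\in\mathsf q(H)$ and $x^2,x^3\in H$ imply $x\in H$. *)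

theory Defs
  imports "HOL-Algebra.Algebra" "HOL-Library.Multiset"
begin

text \<open>Sequences over a group are finite multisets of elements.
  \<open>\<pi>(S) \<ni> 1\<close> iff some ordering (a list with multiset S) multiplies to the identity.\<close>

definition seq_prod :: "('a, 'b) monoid_scheme \<Rightarrow> 'a list \<Rightarrow> 'a" where
  "seq_prod G xs = foldr (\<lambda>x y. x \<otimes>\<^bsub>G\<^esub> y) xs \<one>\<^bsub>G\<^esub>"

definition prod_set :: "('a, 'b) monoid_scheme \<Rightarrow> 'a multiset \<Rightarrow> 'a set" where
  "prod_set G S = {seq_prod G xs | xs. mset xs = S}"

definition BB :: "('a, 'b) monoid_scheme \<Rightarrow> 'a multiset set" where
  "BB G = {S. set_mset S \<subseteq> carrier G \<and> \<one>\<^bsub>G\<^esub> \<in> prod_set G S}"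

text \<open>Embedding of sequences into the free abelian group (finitely supported
  integer-valued functions).\<close>
definition emb :: "'a multiset \<Rightarrow> ('a \<Rightarrow> int)" where
  "emb S = (\<lambda>g. int (count S g))"

text \<open>Quotient group of a submonoid H of the free abelian monoid,
  realised inside the free abelian group: all differences.\<close>
definition qgrp :: "'a multiset set \<Rightarrow> ('a \<Rightarrow> int) set" where
  "qgrp H = {(\<lambda>g. emb A g - emb B g) | A B. A \<in> H \<and> B \<in> H}"

definition seminormal :: "'a multiset set \<Rightarrow> bool" where
  "seminormal H \<longleftrightarrow> (\<forall>x \<in> qgrp H.
      (\<lambda>g. 2 * x g) \<in> emb ` H \<and> (\<lambda>g. 3 * x g) \<in> emb ` H \<longrightarrow> x \<in> emb ` H)"

text \<open>Dihedral group of order 2n: (i, s) stands for \<open>a^i b^s\<close>.\<close>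
definition dihedral :: "nat \<Rightarrow> (nat \<times> bool) monoid" where
  "dihedral n = \<lparr> carrier = {0..<n} \<times> UNIV,
     monoid.mult = (\<lambda>(i, s) (j, t). ((if s then i + n - j else i + j) mod n, s \<noteq> t)),
     monoid.one = (0, False) \<rparr>"

definition dih_a :: "nat \<Rightarrow> nat \<times> bool" where "dih_a n = (1 mod n, False)"
definition dih_b :: "nat \<times> bool" where "dih_b = (0, True)"

end

theory Submission
  imports Defs
begin

text \<open>Write \<open>k = (n - 1) / 2 = 2q + 1\<close>, so \<open>n = 4q + 3\<close>. Since \<open>b a^e = a^{-e} b\<close>, every ordering
  of a sequence of \<open>a\<close>'s and \<open>b\<close>'s multiplies to \<open>a^e b^c\<close> where \<open>c\<close> is the number of \<open>b\<close>'s and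
  \<open>e\<close> is a signed count of the \<open>a\<close>'s. For \<open>S\<close> this gives \<open>|e| \<le> k < n\<close> and \<open>e \<equiv> k\<close> odd, so no
  ordering of \<open>S\<close> is \<open>1\<close>; but \<open>a^k b a^k b^3 = 1\<close> orders \<open>S^2\<close> and \<open>a^{5q+3} b a^q b^5 = a^n = 1\<close>
  orders \<open>S^3\<close>. Then \<open>S = S^3 - S^2\<close> lies in the quotient group, and all of this transfers to
  any group containing a copy of the dihedral group.\<close>

lemma seq_prod_Nil [simp]: "seq_prod G [] = \<one>\<^bsub>G\<^esub>"
  by (simp add: seq_prod_def)

lemma seq_prod_Cons [simp]: "seq_prod G (x # xs) = x \<otimes>\<^bsub>G\<^esub> seq_prod G xs"
  by (simp add: seq_prod_def)

lemma mem_BB_iff: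
  "S \<in> BB G \<longleftrightarrow> set_mset S \<subseteq> carrier G \<and> (\<exists>xs. mset xs = S \<and> seq_prod G xs = \<one>\<^bsub>G\<^esub>)"
  by (auto simp: BB_def prod_set_def) (metis)

lemma (in monoid) seq_prod_closed: "set xs \<subseteq> carrier G \<Longrightarrow> seq_prod G xs \<in> carrier G"
  by (induction xs) auto

lemma (in group_hom) hom_seq_prod:
  "set xs \<subseteq> carrier G \<Longrightarrow> h (seq_prod G xs) = seq_prod H (map h xs)"
  by (induction xs) (auto simp: G.seq_prod_closed)

lemma (in group_hom) image_mset_BB:
  assumes "S \<in> BB G" shows "image_mset h S \<in> BB H"
proof -
  obtain xs where xs: "mset xs = S" "seq_prod G xs = \<one>" and S: "set_mset S \<subseteq> carrier G"
    using assms by (auto simp: mem_BB_iff)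
  then have "seq_prod H (map h xs) = \<one>\<^bsub>H\<^esub>"
    using hom_seq_prod by (metis hom_one set_mset_mset)
  moreover have "set_mset (image_mset h S) \<subseteq> carrier H"
    using S by auto
  ultimately show ?thesis
    using xs by (auto simp: mem_BB_iff intro: exI[of _ "map h xs"])
qed

lemma image_mset_BB_iff:
  assumes "group G" "group H" "h \<in> iso G H" "set_mset S \<subseteq> carrier G"
  shows "image_mset h S \<in> BB H \<longleftrightarrow> S \<in> BB G"
proof
  have "group_hom G H h"
    using assms by (simp add: group_hom_def group_hom_axioms_def iso_imp_homomorphism)
  then show "S \<in> BB G \<Longrightarrow> image_mset h S \<in> BB H"
    by (rule group_hom.image_mset_BB)
  define g where "g = inv_into (carrier G) h"
  have "g \<in> iso H G"
    unfolding g_def using assms by (simp add: group.iso_set_sym)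
  then have "group_hom H G g"
    using assms by (simp add: group_hom_def group_hom_axioms_def iso_imp_homomorphism)
  moreover have "image_mset g (image_mset h S) = S"
    using assms(3,4) by (auto simp: g_def iso_def bij_betw_def multiset.map_comp
        intro!: multiset.map_ident_strong)
  ultimately show "image_mset h S \<in> BB H \<Longrightarrow> S \<in> BB G"
    by (metis group_hom.image_mset_BB)
qed

lemma BB_subgroup_iff:
  assumes "set_mset S \<subseteq> H" "H \<subseteq> carrier G"
  shows "S \<in> BB (G\<lparr>carrier := H\<rparr>) \<longleftrightarrow> S \<in> BB G"
proof -
  have "seq_prod (G\<lparr>carrier := H\<rparr>) = seq_prod G"
    by (simp add: seq_prod_def fun_eq_iff)
  then show ?thesis
    using assms by (auto simp: mem_BB_iff)
qed

lemma emb_repeat_mset: "emb (repeat_mset m S) = (\<lambda>g. int m * emb S g)"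
  by (simp add: emb_def fun_eq_iff)

lemma emb_inject: "emb S = emb T \<longleftrightarrow> S = T"
  by (simp add: emb_def fun_eq_iff multiset_eq_iff)

lemma emb_in_qgrp:
  assumes "repeat_mset 3 S \<in> H" "repeat_mset 2 S \<in> H"
  shows "emb S \<in> qgrp H"
proof -
  have "emb S = (\<lambda>g. emb (repeat_mset 3 S) g - emb (repeat_mset 2 S) g)"
    by (simp add: emb_repeat_mset)
  with assms show ?thesis
    unfolding qgrp_def by blast
qed

lemma not_seminormalI:
  assumes "S \<notin> H" "repeat_mset 2 S \<in> H" "repeat_mset 3 S \<in> H"
  shows "\<not> seminormal H"
proof
  have "(\<lambda>g. 2 * emb S g) = emb (repeat_mset 2 S)" "(\<lambda>g. 3 * emb S g) = emb (repeat_mset 3 S)"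
    by (simp_all add: emb_repeat_mset)
  then have "(\<lambda>g. 2 * emb S g) \<in> emb ` H" "(\<lambda>g. 3 * emb S g) \<in> emb ` H"
    using assms(2,3) by simp_all
  moreover assume "seminormal H"
  moreover have "emb S \<in> qgrp H"
    using assms(3,2) by (rule emb_in_qgrp)
  ultimately have "emb S \<in> emb ` H"
    unfolding seminormal_def by blast
  then show False
    using assms(1) by (auto simp: emb_inject)
qed

lemma image_mset_repeat_mset: "image_mset f (repeat_mset m S) = repeat_mset m (image_mset f S)"
  by (induction m) auto

lemma set_mset_repeat_mset_subset: "set_mset (repeat_mset m S) \<subseteq> set_mset S"
  by (metis count_greater_zero_iff count_repeat_mset nat_0_less_mult_iff subsetI)

lemma not_seminormal_BB_if_subgroup_iso:
  assumes G: "group G" and H: "subgroup H G" and iso: "G\<lparr>carrier := H\<rparr> \<cong> K" and K: "group K"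
    and S: "set_mset S \<subseteq> carrier K" "S \<notin> BB K" "repeat_mset 2 S \<in> BB K" "repeat_mset 3 S \<in> BB K"
  shows "\<not> seminormal (BB G)"
proof -
  let ?GH = "G\<lparr>carrier := H\<rparr>"
  have GH: "group ?GH"
    using subgroup.subgroup_is_group[OF H G] .
  obtain \<phi> where "\<phi> \<in> iso ?GH K"
    using iso by (auto simp: is_iso_def)
  then have \<psi>: "inv_into H \<phi> \<in> iso K ?GH"
    using group.iso_set_sym[OF GH] by simp
  define T where "T = image_mset (inv_into H \<phi>) S"
  have "set_mset T \<subseteq> H"
    using \<psi> S(1) by (auto simp: T_def iso_def hom_def)
  then have T_H: "set_mset (repeat_mset m T) \<subseteq> H" for m
    by (rule order.trans[OF set_mset_repeat_mset_subset])
  have S_K: "set_mset (repeat_mset m S) \<subseteq> carrier K" for m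
    using set_mset_repeat_mset_subset[of m S] S(1) by (rule order.trans)
  have T_iff: "repeat_mset m T \<in> BB G \<longleftrightarrow> repeat_mset m S \<in> BB K" for m
  proof -
    have "repeat_mset m T \<in> BB G \<longleftrightarrow> repeat_mset m T \<in> BB ?GH"
      using BB_subgroup_iff[OF T_H subgroup.subset[OF H]] by simp
    also have "\<dots> \<longleftrightarrow> repeat_mset m S \<in> BB K"
      unfolding T_def image_mset_repeat_mset[symmetric]
      by (rule image_mset_BB_iff[OF K GH \<psi> S_K])
    finally show ?thesis .
  qed
  show ?thesis
    using not_seminormalI[of T "BB G"] T_iff[of 1] T_iff[of 2] T_iff[of 3] S(2-4) by simp
qed

lemma carrier_dihedral [simp]: "carrier (dihedral n) = {0..<n} \<times> UNIV"
  by (simp add: dihedral_def)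

lemma one_dihedral [simp]: "\<one>\<^bsub>dihedral n\<^esub> = (0, False)"
  by (simp add: dihedral_def)

text \<open>The truncated subtraction \<open>i + n - j\<close> of the definition, recast in \<open>int\<close>.\<close>
lemma dihedral_mult_int:
  assumes "j < n"
  shows "(i, s) \<otimes>\<^bsub>dihedral n\<^esub> (j, t) =
    (nat ((int i + (if s then - int j else int j)) mod int n), s \<noteq> t)"
proof -
  have "(int i + int n - int j) mod int n = (int i - int j) mod int n"
    by (metis add.commute add_diff_eq mod_add_self1)
  then have "int ((i + n - j) mod n) = (int i - int j) mod int n"
    using assms by (simp add: zmod_int of_nat_diff)
  moreover have "int ((i + j) mod n) = (int i + int j) mod int n"
    by (simp add: zmod_int)
  ultimately show ?thesis
    by (auto simp: dihedral_def simp flip: nat_int)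
qed

lemma dihedral_assoc:
  assumes "0 < n" "i < n" "j < n" "k < n"
  shows "((i, s) \<otimes>\<^bsub>dihedral n\<^esub> (j, t)) \<otimes>\<^bsub>dihedral n\<^esub> (k, u)
       = (i, s) \<otimes>\<^bsub>dihedral n\<^esub> ((j, t) \<otimes>\<^bsub>dihedral n\<^esub> (k, u))"
proof -
  have "nat (m mod int n) < n" for m
    using assms(1) by (simp add: nat_less_iff)
  with assms show ?thesis
    by (simp only: dihedral_mult_int) (cases s; cases t; simp add: mod_simps algebra_simps)
qed

lemma group_dihedral:
  assumes "0 < n" shows "group (dihedral n)"
proof (rule groupI)
  show "\<one>\<^bsub>dihedral n\<^esub> \<in> carrier (dihedral n)"
    using assms by simp
next
  fix x y assume "x \<in> carrier (dihedral n)" "y \<in> carrier (dihedral n)"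
  then show "x \<otimes>\<^bsub>dihedral n\<^esub> y \<in> carrier (dihedral n)"
    using assms by (cases x; cases y) (simp add: dihedral_def)
next
  fix x assume "x \<in> carrier (dihedral n)"
  then show "\<one>\<^bsub>dihedral n\<^esub> \<otimes>\<^bsub>dihedral n\<^esub> x = x"
    by (cases x) (simp add: dihedral_def)
next
  fix x assume "x \<in> carrier (dihedral n)"
  then obtain i s where x: "x = (i, s)" "i < n"
    by auto
  then have "(if s then (i, True) else ((n - i) mod n, False)) \<otimes>\<^bsub>dihedral n\<^esub> x = \<one>\<^bsub>dihedral n\<^esub>"
    using assms by (auto simp: dihedral_mult_int dihedral_def mod_simps of_nat_diff)
  then show "\<exists>y\<in>carrier (dihedral n). y \<otimes>\<^bsub>dihedral n\<^esub> x = \<one>\<^bsub>dihedral n\<^esub>"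
    using assms x(2) by (intro bexI) auto
next
  fix x y z
  assume "x \<in> carrier (dihedral n)" "y \<in> carrier (dihedral n)" "z \<in> carrier (dihedral n)"
  then show "x \<otimes>\<^bsub>dihedral n\<^esub> y \<otimes>\<^bsub>dihedral n\<^esub> z = x \<otimes>\<^bsub>dihedral n\<^esub> (y \<otimes>\<^bsub>dihedral n\<^esub> z)"
    using dihedral_assoc[OF assms] by auto
qed

lemma dih_a_neq_dih_b [simp]: "dih_a n \<noteq> dih_b" "dih_b \<noteq> dih_a n"
  by (simp_all add: dih_a_def dih_b_def)

lemma dih_generators_carrier: "0 < n \<Longrightarrow> {dih_a n, dih_b} \<subseteq> carrier (dihedral n)"
  by (simp add: dih_a_def dih_b_def)

fun dih_exponent :: "(nat \<times> bool) list \<Rightarrow> int" where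
  "dih_exponent [] = 0"
| "dih_exponent (x # xs) = (if x = dih_b then - dih_exponent xs else 1 + dih_exponent xs)"

lemma seq_prod_dihedral:
  assumes "0 < n" "set xs \<subseteq> {dih_a n, dih_b}"
  shows "seq_prod (dihedral n) xs = (nat (dih_exponent xs mod int n), odd (count (mset xs) dih_b))"
  using assms(2)
proof (induction xs)
  case (Cons x xs)
  define e where "e = dih_exponent xs"
  have lt: "nat (e mod int n) < n" and e: "int (nat (e mod int n)) = e mod int n"
    using assms(1) by (simp_all add: nat_less_iff)
  have "int (1 mod n) = 1 mod int n"
    by (simp only: zmod_int of_nat_1)
  with Cons lt e show ?case
    by (auto simp: dihedral_mult_int dih_a_def dih_b_def mod_simps simp flip: e_def)
qed simp

lemma seq_prod_dihedral_eq_one_iff: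
  assumes "0 < n" "set xs \<subseteq> {dih_a n, dih_b}"
  shows "seq_prod (dihedral n) xs = \<one>\<^bsub>dihedral n\<^esub>
     \<longleftrightarrow> int n dvd dih_exponent xs \<and> even (count (mset xs) dih_b)"
  using assms by (simp add: seq_prod_dihedral dvd_eq_mod_eq_0 nat_eq_iff)

lemma dih_exponent_bound:
  assumes "set xs \<subseteq> {dih_a n, dih_b}"
  shows "\<bar>dih_exponent xs\<bar> \<le> int (count (mset xs) (dih_a n))
    \<and> even (dih_exponent xs + int (count (mset xs) (dih_a n)))"
  using assms by (induction xs) auto

lemma dihedral_not_product_one:
  assumes "odd k" "k < n"
  shows "replicate_mset k (dih_a n) + replicate_mset m dih_b \<notin> BB (dihedral n)"
proof
  assume "replicate_mset k (dih_a n) + replicate_mset m dih_b \<in> BB (dihedral n)"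
  then obtain xs where xs: "mset xs = replicate_mset k (dih_a n) + replicate_mset m dih_b"
    and one: "seq_prod (dihedral n) xs = \<one>\<^bsub>dihedral n\<^esub>"
    by (auto simp: mem_BB_iff)
  have set_xs: "set xs \<subseteq> {dih_a n, dih_b}"
    by (simp flip: set_mset_mset add: xs)
  have count_a: "count (mset xs) (dih_a n) = k"
    by (simp add: xs)
  have "int n dvd dih_exponent xs"
    using one seq_prod_dihedral_eq_one_iff[OF _ set_xs] assms(2) by simp
  moreover have "\<bar>dih_exponent xs\<bar> < int n" and odd: "odd (dih_exponent xs)"
    using dih_exponent_bound[OF set_xs] assms unfolding count_a by auto
  ultimately have "dih_exponent xs = 0"
    using dvd_imp_le_int[of "dih_exponent xs" "int n"] by linarith
  with odd show False
    by simp
qed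

lemma dih_exponent_replicate_append [simp]:
  "dih_exponent (replicate m (dih_a n) @ ys) = int m + dih_exponent ys"
  by (induction m) auto

lemma mset_in_BB_dihedral:
  assumes "0 < n" "set xs \<subseteq> {dih_a n, dih_b}"
    and "int n dvd dih_exponent xs" "even (count (mset xs) dih_b)"
  shows "mset xs \<in> BB (dihedral n)"
proof -
  have "set_mset (mset xs) \<subseteq> carrier (dihedral n)"
    using order.trans[OF assms(2) dih_generators_carrier[OF assms(1)]] by simp
  then show ?thesis
    using assms(3,4) seq_prod_dihedral_eq_one_iff[OF assms(1,2)] by (auto simp: mem_BB_iff)
qed

lemma dihedral_square_product_one:
  assumes "0 < n"
  shows "repeat_mset 2 (replicate_mset k (dih_a n) + replicate_mset 2 dih_b) \<in> BB (dihedral n)"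
proof -
  let ?xs = "replicate k (dih_a n) @ dih_b # replicate k (dih_a n) @ [dih_b, dih_b, dih_b]"
  have "repeat_mset 2 (replicate_mset k (dih_a n) + replicate_mset 2 dih_b) = mset ?xs"
    by (simp add: multiset_eq_iff)
  also have "\<dots> \<in> BB (dihedral n)"
    using assms by (intro mset_in_BB_dihedral) auto
  finally show ?thesis .
qed

lemma dihedral_cube_product_one:
  assumes "n = 4 * q + 3"
  shows "repeat_mset 3 (replicate_mset (2 * q + 1) (dih_a n) + replicate_mset 2 dih_b) \<in> BB (dihedral n)"
proof -
  let ?xs = "replicate (5 * q + 3) (dih_a n) @ dih_b # replicate q (dih_a n) @ [dih_b, dih_b, dih_b, dih_b, dih_b]"
  have "repeat_mset 3 (replicate_mset (2 * q + 1) (dih_a n) + replicate_mset 2 dih_b) = mset ?xs"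
    by (simp add: multiset_eq_iff)
  also have "\<dots> \<in> BB (dihedral n)"
    using assms by (intro mset_in_BB_dihedral) auto
  finally show ?thesis .
qed

theorem mainTheorem9:
  fixes n :: nat
  assumes "n \<ge> 3" and "n mod 4 = 3"
  defines "S \<equiv> replicate_mset ((n - 1) div 2) (dih_a n) + replicate_mset 2 dih_b"
  shows "emb S \<in> qgrp (BB (dihedral n)) \<and> S \<notin> BB (dihedral n)
      \<and> repeat_mset 2 S \<in> BB (dihedral n) \<and> repeat_mset 3 S \<in> BB (dihedral n)
      \<and> (\<forall>G :: 'g monoid. group G \<and> finite (carrier G)
            \<and> (\<exists>H. subgroup H G \<and> G\<lparr>carrier := H\<rparr> \<cong> dihedral n)
            \<longrightarrow> \<not> seminormal (BB G))"
proof -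
  obtain q where n: "n = 4 * q + 3"
    using assms(2) by (metis div_mult_mod_eq mult.commute)
  then have S: "S = replicate_mset (2 * q + 1) (dih_a n) + replicate_mset 2 dih_b"
    by (simp add: S_def)
  have not_B: "S \<notin> BB (dihedral n)"
    unfolding S using n by (intro dihedral_not_product_one) auto
  have square: "repeat_mset 2 S \<in> BB (dihedral n)"
    unfolding S_def using n by (intro dihedral_square_product_one) simp
  have cube: "repeat_mset 3 S \<in> BB (dihedral n)"
    unfolding S using n by (rule dihedral_cube_product_one)
  have S_carrier: "set_mset S \<subseteq> carrier (dihedral n)"
    using dih_generators_carrier[of n] n by (auto simp: S_def)
  have "\<not> seminormal (BB G)"
    if "group G" "subgroup H G" "G\<lparr>carrier := H\<rparr> \<cong> dihedral n" for G :: "'g monoid" and H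
    using not_seminormal_BB_if_subgroup_iso[OF that group_dihedral S_carrier not_B square cube] n
    by simp
  then show ?thesis
    using emb_in_qgrp[OF cube square] not_B square cube by blast
qed

end
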